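(* Let $N\ge 1$, $l>0$, $\Delta\tau>0$, $L>(N+1)l$ and $v_{0,\min}\le v_{0,\max}$. Consider the platoon system, with state $y=(\tilde x_1,\tilde v_1,\dots,\tilde x_N,\tilde v_N,v_0)\in\mathbb{R}^{2N+1}$, input $u=(u_0,\dots,u_N)\in\mathbb{U}$ and disturbance $w\in\mathbb{W}$: $$\tilde x_i^+=\tilde x_i+\tilde v_i\Delta\tau+(u_0-u_i)\tfrac{\Delta\tau^2}{2}+w_{0,x}-w_{i,x},\quad \tilde v_i^+=\tilde v_i+(u_0-u_i)\Delta\tau+w_{0,v}-w_{i,v}\ (i=1,\dots,N),\quad v_0^+=v_0+u_0\Delta\tau+w_{0,v}.$$ Let $\mathbb{S}$, $\mathbb{S}_0,\dots,\mathbb{S}_N$, $\mathcal{S}$, the hyper-rectangles $\underline{\mathcal{R}}_{\mathbb{U}}=\prod_{i=0}^N I_i$ and $\overline{\mathcal{R}}_{\mathbb{W}}=\prod_{i=0}^N J_{i,x}\times J_{i,v}$, and the sets $\Omega_0,\dots,\Omega_N$ be as described in the context. Then $\mathcal{S}\subseteq\mathbb{S}$, and the set $$\Omega:=\{y\in\mathbb{R}^{2N+1} : (\tilde x_i,\tilde v_i)\in\Omega_i \text{ for } i=1,\dots,N,\ v_0\in\Omega_0\}$$ is a robust control invariant set for the platoon system (with inputs in $\mathbb{U}$ and disturbances in $\mathbb{W}$) that is contained in $\mathcal{S}$.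
   Context: A platoon consists of $N+1$ vehicles indexed $0$ (the leader) to $N$, all of length $l$. Vehicle $i$ has absolute position $x_i$, velocity $v_i$, control input $u_i$ and additive disturbances $w_{i,x},w_{i,v}$, with dynamics $x_i^+=x_i+v_i\Delta\tau+u_i\frac{\Delta\tau^2}{2}+w_{i,x}$, $v_i^+=v_i+u_i\Delta\tau+w_{i,v}$. Admissible inputs: $\mathbb{U}=\prod_{i=0}^N[u_{i,\min},u_{i,\max}]$; admissible disturbances: $w=(w_{i,s})_{i=0,\dots,N;\,s=x,v}\in\mathbb{W}=\prod_{i=0}^N[w_{i,x,\min},w_{i,x,\max}]\times[w_{i,v,\min},w_{i,v,\max}]$. Relative coordinates are $\tilde x_i=x_0-x_i$, $\tilde v_i=v_0-v_i$ ($i=1,\dots,N$), giving the platoon system in the claim. Safe set: $\mathbb{S}=\{y : \tilde x_i\ge \tilde x_{i-1}+l \ (i=1,\dots,N)\text{ with }\tilde x_0:=0,\ \tilde x_N\le L,\ v_0\in[v_{0,\min},v_{0,\max}]\}$. Envelope sets: for $i=1,\dots,N$, $\mathbb{S}_i=\{(\tilde x_i,\tilde v_i)\in\mathbb{R}^2 : il+(i-1)\frac{L-Nl}{N}\le\tilde x_i\le il+i\frac{L-Nl}{N}\}$, and $\mathbb{S}_0=[v_{0,\min},v_{0,\max}]$; $\mathcal{S}=\{y : (\tilde x_i,\tilde v_i)\in\mathbb{S}_i\ (i=1,\dots,N),\ v_0\in\mathbb{S}_0\}$. Relative inputs and disturbances: $\tilde u_0=u_0$, $\tilde u_i=u_0-u_i$,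 $\tilde w_{0,s}=w_{0,s}$, $\tilde w_{i,s}=w_{0,s}-w_{i,s}$ ($i=1,\dots,N$, $s=x,v$). Let $\mathcal{U}=\{\tilde u : u\in\mathbb{U}\}\subseteq\mathbb{R}^{N+1}$ and $\mathcal{W}=\{\tilde w : w\in\mathbb{W}\}\subseteq\mathbb{R}^{2(N+1)}$. $\underline{\mathcal{R}}_{\mathbb{U}}=\prod_{i=0}^N I_i$ is any hyper-rectangle (product of closed intervals) with $\underline{\mathcal{R}}_{\mathbb{U}}\subseteq\mathcal{U}$, and $\overline{\mathcal{R}}_{\mathbb{W}}=\prod_{i=0}^N J_{i,x}\times J_{i,v}$ is any hyper-rectangle with $\mathcal{W}\subseteq\overline{\mathcal{R}}_{\mathbb{W}}$. For $i=1,\dots,N$, $\Omega_i\subseteq\mathbb{S}_i$ is a set such that for every $(\tilde x,\tilde v)\in\Omega_i$ there exists $\tilde u\in I_i$ with $(\tilde x+\tilde v\Delta\tau+\tilde u\frac{\Delta\tau^2}{2}+\omega_x,\ \tilde v+\tilde u\Delta\tau+\omega_v)\in\Omega_i$ for all $\omega_x\in J_{i,x}$, $\omega_v\in J_{i,v}$. $\Omega_0\subseteq\mathbb{S}_0$ is a set such that for every $v\in\Omega_0$ there exists $\tilde u\in I_0$ with $v+\tilde u\Delta\tau+\omega\in\Omega_0$ for all $\omega\in[w_{0,v,\min},w_{0,v,\max}]$. A set $\Omega\subseteq\mathbb{R}^{2N+1}$ is robust control invariant (RCI) for the platoon system if for every $y\in\Omega$ there exists $u\in\mathbb{U}$ such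 that the successor state lies in $\Omega$ for every $w\in\mathbb{W}$. *)

theory Defs
  imports "HOL-Analysis.Analysis"
begin

text \<open>Platoon state y = (xt, vt, v0): xt i, vt i for i = 1..N are the relative
  positions/velocities; v0 is the leader velocity. Values of xt, vt outside 1..N
  are unused (junk).\<close>

type_synonym pstate = "(nat \<Rightarrow> real) \<times> (nat \<Rightarrow> real) \<times> real"
type_synonym pdist = "(nat \<Rightarrow> real) \<times> (nat \<Rightarrow> real)"

definition platoon_step :: "real \<Rightarrow> pstate \<Rightarrow> (nat \<Rightarrow> real) \<Rightarrow> pdist \<Rightarrow> pstate" where
  "platoon_step dt y u w =
     (case y of (xt, vt, v0) \<Rightarrow> case w of (wx, wv) \<Rightarrow>
       ((\<lambda>i. xt i + vt i * dt + (u 0 - u i) * dt\<^sup>2 / 2 + wx 0 - wx i),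
        (\<lambda>i. vt i + (u 0 - u i) * dt + wv 0 - wv i),
        v0 + u 0 * dt + wv 0))"

definition adm_inputs :: "nat \<Rightarrow> (nat \<Rightarrow> real) \<Rightarrow> (nat \<Rightarrow> real) \<Rightarrow> (nat \<Rightarrow> real) set" where
  "adm_inputs N umin umax = {u. \<forall>i\<le>N. umin i \<le> u i \<and> u i \<le> umax i}"

definition adm_dists :: "nat \<Rightarrow> (nat \<Rightarrow> real) \<Rightarrow> (nat \<Rightarrow> real) \<Rightarrow> (nat \<Rightarrow> real) \<Rightarrow> (nat \<Rightarrow> real) \<Rightarrow> pdist set" where
  "adm_dists N wxmin wxmax wvmin wvmax =
     {(wx, wv). \<forall>i\<le>N. wxmin i \<le> wx i \<and> wx i \<le> wxmax i \<and> wvmin i \<le> wv i \<and> wv i \<le> wvmax i}"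

definition rel :: "(nat \<Rightarrow> real) \<Rightarrow> nat \<Rightarrow> real" where
  "rel q = (\<lambda>i. if i = 0 then q 0 else q 0 - q i)"

definition rel_inputs :: "(nat \<Rightarrow> real) set \<Rightarrow> (nat \<Rightarrow> real) set" where
  "rel_inputs U = rel ` U"

definition rel_dists :: "pdist set \<Rightarrow> pdist set" where
  "rel_dists W = (\<lambda>(wx, wv). (rel wx, rel wv)) ` W"

definition rect_u :: "nat \<Rightarrow> (nat \<Rightarrow> real set) \<Rightarrow> (nat \<Rightarrow> real) set" where
  "rect_u N I = {u. \<forall>i\<le>N. u i \<in> I i}"

definition rect_w :: "nat \<Rightarrow> (nat \<Rightarrow> real set) \<Rightarrow> (nat \<Rightarrow> real set) \<Rightarrow> pdist set" where
  "rect_w N Jx Jv = {(wx, wv). \<forall>i\<le>N. wx i \<in> Jx i \<and> wv i \<in> Jv i}"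

definition closed_interval_set :: "real set \<Rightarrow> bool" where
  "closed_interval_set A \<longleftrightarrow> closed A \<and> is_interval A"

definition safe_set :: "nat \<Rightarrow> real \<Rightarrow> real \<Rightarrow> real \<Rightarrow> real \<Rightarrow> pstate set" where
  "safe_set N l L v0min v0max =
     {(xt, vt, v0). (\<forall>i\<in>{1..N}. xt i \<ge> (if i = 1 then 0 else xt (i - 1)) + l)
        \<and> xt N \<le> L \<and> v0min \<le> v0 \<and> v0 \<le> v0max}"

definition env_i :: "nat \<Rightarrow> real \<Rightarrow> real \<Rightarrow> nat \<Rightarrow> (real \<times> real) set" where
  "env_i N l L i =
     {(x, v). real i * l + (real i - 1) * ((L - real N * l) / real N) \<le> x
            \<and> x \<le> real i * l + real i * ((L - real N * l) / real N)}"

definition env_0 :: "real \<Rightarrow> real \<Rightarrow> real set" where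
  "env_0 v0min v0max = {v0min..v0max}"

definition env_set :: "nat \<Rightarrow> real \<Rightarrow> real \<Rightarrow> real \<Rightarrow> real \<Rightarrow> pstate set" where
  "env_set N l L v0min v0max =
     {(xt, vt, v0). (\<forall>i\<in>{1..N}. (xt i, vt i) \<in> env_i N l L i) \<and> v0 \<in> env_0 v0min v0max}"

definition omega_set :: "nat \<Rightarrow> (nat \<Rightarrow> (real \<times> real) set) \<Rightarrow> real set \<Rightarrow> pstate set" where
  "omega_set N Om Om0 = {(xt, vt, v0). (\<forall>i\<in>{1..N}. (xt i, vt i) \<in> Om i) \<and> v0 \<in> Om0}"

definition rci :: "('s \<Rightarrow> 'u \<Rightarrow> 'w \<Rightarrow> 's) \<Rightarrow> 'u set \<Rightarrow> 'w set \<Rightarrow> 's set \<Rightarrow> bool" where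
  "rci f U W \<Omega> \<longleftrightarrow> (\<forall>y\<in>\<Omega>. \<exists>u\<in>U. \<forall>w\<in>W. f y u w \<in> \<Omega>)"

end

theory Submission
  imports Defs
begin

text \<open>The envelope bands are consecutive intervals of width l + d (with
  d = (L - N l)/N) stacked from 0 to L, so any choice of one point per band
  keeps neighbours at distance at least l and the last vehicle within L. In relative
  coordinates the platoon dynamics decouples into N double integrators driven by
  u0 - ui and one integrator driven by u0; since the admissible relative
  inputs contain a box and the relative disturbances lie in a box, robust invariant sets of
  the components can be combined into one for the whole platoon.\<close>

lemma rel_0 [simp]: "rel q 0 = q 0"
  by (simp add: rel_def)

lemma rel_nonzero [simp]: "i \<noteq> 0 \<Longrightarrow> rel q i = q 0 - q i"
  by (simp add: rel_def)

lemma env_set_subset_safe_set: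
  assumes "N \<ge> 1"
  shows "env_set N l L v0min v0max \<subseteq> safe_set N l L v0min v0max"
proof
  define d where "d = (L - real N * l) / real N"
  have "real N * d = L - real N * l"
    using assms unfolding d_def by simp
  fix y assume y: "y \<in> env_set N l L v0min v0max"
  obtain xt vt v0 where y_eq: "y = (xt, vt, v0)" by (cases y) auto
  have band: "real i * l + (real i - 1) * d \<le> xt i \<and> xt i \<le> real i * l + real i * d"
    if "i \<in> {1..N}" for i
    using y that unfolding y_eq env_set_def env_i_def d_def by auto
  have gap: "xt i \<ge> (if i = 1 then 0 else xt (i - 1)) + l" if i: "i \<in> {1..N}" for i
  proof (cases "i = 1")
    case True
    then show ?thesis using band[OF i] by simp
  next
    case False
    then have "i - 1 \<in> {1..N}" "real (i - 1) = real i - 1" using i by auto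
    then show ?thesis using band[OF i] band[of "i - 1"] False by (simp add: algebra_simps)
  qed
  have "xt N \<le> L"
    using band[of N] assms \<open>real N * d = L - real N * l\<close> by (simp add: algebra_simps)
  with gap y show "y \<in> safe_set N l L v0min v0max"
    unfolding y_eq safe_set_def env_set_def env_0_def by auto
qed

lemma env_set_eq_omega_set:
  "env_set N l L v0min v0max = omega_set N (env_i N l L) (env_0 v0min v0max)"
  by (simp add: env_set_def omega_set_def)

lemma omega_set_mono:
  assumes "\<forall>i\<in>{1..N}. Om i \<subseteq> Om' i" and "Om0 \<subseteq> Om0'"
  shows "omega_set N Om Om0 \<subseteq> omega_set N Om' Om0'"
  using assms unfolding omega_set_def by blast

lemma platoon_step_in_omega_set_iff:
  "platoon_step dt (xt, vt, v0) u (wx, wv) \<in> omega_set N Om Om0 \<longleftrightarrow>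
     (\<forall>i\<in>{1..N}. (xt i + vt i * dt + rel u i * dt\<^sup>2 / 2 + rel wx i,
                  vt i + rel u i * dt + rel wv i) \<in> Om i)
     \<and> v0 + rel u 0 * dt + rel wv 0 \<in> Om0"
  by (simp add: platoon_step_def omega_set_def add_diff_eq)

lemma rci_omega_set:
  assumes RU: "rect_u N I \<subseteq> rel_inputs U"
    and RW: "rel_dists W \<subseteq> rect_w N Jx Jv"
    and W0: "\<forall>(wx, wv)\<in>W. wv 0 \<in> K"
    and Om_inv: "\<forall>i\<in>{1..N}. \<forall>(x, v)\<in>Om i. \<exists>ut\<in>I i. \<forall>ox\<in>Jx i. \<forall>ov\<in>Jv i.
                   (x + v * dt + ut * dt\<^sup>2 / 2 + ox, v + ut * dt + ov) \<in> Om i"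
    and Om0_inv: "\<forall>v\<in>Om0. \<exists>ut\<in>I 0. \<forall>om\<in>K. v + ut * dt + om \<in> Om0"
  shows "rci (platoon_step dt) U W (omega_set N Om Om0)"
  unfolding rci_def
proof
  fix y assume "y \<in> omega_set N Om Om0"
  then obtain xt vt v0 where y_eq: "y = (xt, vt, v0)"
    and y_Om: "\<forall>i\<in>{1..N}. (xt i, vt i) \<in> Om i" and y_Om0: "v0 \<in> Om0"
    unfolding omega_set_def by auto
  obtain ui where ui: "\<forall>i\<in>{1..N}. ui i \<in> I i \<and> (\<forall>ox\<in>Jx i. \<forall>ov\<in>Jv i.
      (xt i + vt i * dt + ui i * dt\<^sup>2 / 2 + ox, vt i + ui i * dt + ov) \<in> Om i)"
  proof -
    have "\<forall>i\<in>{1..N}. \<exists>ut\<in>I i. \<forall>ox\<in>Jx i. \<forall>ov\<in>Jv i.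
        (xt i + vt i * dt + ut * dt\<^sup>2 / 2 + ox, vt i + ut * dt + ov) \<in> Om i"
      using Om_inv y_Om by fastforce
    then show thesis using that by metis
  qed
  obtain u0 where u0: "u0 \<in> I 0" "\<forall>om\<in>K. v0 + u0 * dt + om \<in> Om0"
    using Om0_inv y_Om0 by blast
  have "ui(0 := u0) \<in> rect_u N I"
    using ui u0 unfolding rect_u_def by auto
  then obtain u where u: "u \<in> U" "rel u = ui(0 := u0)"
    using RU unfolding rel_inputs_def by auto
  show "\<exists>u\<in>U. \<forall>w\<in>W. platoon_step dt y u w \<in> omega_set N Om Om0"
  proof (intro bexI[OF _ u(1)] ballI)
    fix w assume w: "w \<in> W"
    obtain wx wv where w_eq: "w = (wx, wv)" by (cases w) auto
    have "(rel wx, rel wv) \<in> rect_w N Jx Jv"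
      using RW w unfolding rel_dists_def w_eq by force
    then have "\<forall>i\<in>{1..N}. rel wx i \<in> Jx i \<and> rel wv i \<in> Jv i"
      unfolding rect_w_def by auto
    moreover have "wv 0 \<in> K"
      using W0 w unfolding w_eq by auto
    ultimately show "platoon_step dt y u w \<in> omega_set N Om Om0"
      unfolding y_eq w_eq platoon_step_in_omega_set_iff u(2) using ui u0 by auto
  qed
qed

theorem proposition2:
  fixes N :: nat and l L dt v0min v0max :: real
    and umin umax wxmin wxmax wvmin wvmax :: "nat \<Rightarrow> real"
    and I Jx Jv :: "nat \<Rightarrow> real set"
    and Om :: "nat \<Rightarrow> (real \<times> real) set" and Om0 :: "real set"
  assumes N: "N \<ge> 1" and l: "l > 0" and dt: "dt > 0"
    and L: "L > (real N + 1) * l" and v0: "v0min \<le> v0max"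
    and I_int: "\<forall>i\<le>N. closed_interval_set (I i)"
    and J_int: "\<forall>i\<le>N. closed_interval_set (Jx i) \<and> closed_interval_set (Jv i)"
    and RU: "rect_u N I \<subseteq> rel_inputs (adm_inputs N umin umax)"
    and RW: "rel_dists (adm_dists N wxmin wxmax wvmin wvmax) \<subseteq> rect_w N Jx Jv"
    and Om_sub: "\<forall>i\<in>{1..N}. Om i \<subseteq> env_i N l L i"
    and Om_inv: "\<forall>i\<in>{1..N}. \<forall>(x, v)\<in>Om i. \<exists>ut\<in>I i. \<forall>ox\<in>Jx i. \<forall>ov\<in>Jv i.
                   (x + v * dt + ut * dt\<^sup>2 / 2 + ox, v + ut * dt + ov) \<in> Om i"
    and Om0_sub: "Om0 \<subseteq> env_0 v0min v0max"
    and Om0_inv: "\<forall>v\<in>Om0. \<exists>ut\<in>I 0. \<forall>om\<in>{wvmin 0..wvmax 0}. v + ut * dt + om \<in> Om0"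
  shows "env_set N l L v0min v0max \<subseteq> safe_set N l L v0min v0max
       \<and> rci (platoon_step dt) (adm_inputs N umin umax) (adm_dists N wxmin wxmax wvmin wvmax)
             (omega_set N Om Om0)
       \<and> omega_set N Om Om0 \<subseteq> env_set N l L v0min v0max"
proof (intro conjI)
  show "env_set N l L v0min v0max \<subseteq> safe_set N l L v0min v0max"
    using N by (rule env_set_subset_safe_set)
  have "\<forall>(wx, wv)\<in>adm_dists N wxmin wxmax wvmin wvmax. wv 0 \<in> {wvmin 0..wvmax 0}"
    unfolding adm_dists_def by auto
  then show "rci (platoon_step dt) (adm_inputs N umin umax) (adm_dists N wxmin wxmax wvmin wvmax)
          (omega_set N Om Om0)"
    by (rule rci_omega_set[OF RU RW _ Om_inv Om0_inv])
  show "omega_set N Om Om0 \<subseteq> env_set N l L v0min v0max"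
    unfolding env_set_eq_omega_set using Om_sub Om0_sub by (rule omega_set_mono)
qed

end
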